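(* Let $k\ge 1$, let $G=K_2\vee\overline{K_k}$, and let $v$ be a vertex of degree $2$ in $G$. If $p\ge\max\{4,\Delta(G)\}$, then $G$ is $f_{p,v}$-edge-orientable.
   Context: $G_1\vee G_2$ denotes the join: the disjoint union of $G_1$ and $G_2$ plus all edges between them. $\overline{K_k}$ is the edgeless graph on $k$ vertices. An orientation of a graph $H$ is any digraph obtained by replacing each edge $uv$ with the arc $(u,v)$, with the arc $(v,u)$, or with both arcs. A kernel of a digraph $D$ is an independent set $S$ such that every vertex of $D-S$ has an out-neighbor in $S$. $D$ is kernel-perfect if every induced subdigraph of $D$ has a kernel. For $f:V(H)\to\mathbb{N}$, an orientation $D$ of $H$ is $f$-kernel-perfect if it is kernel-perfect and $f(v)\ge 1+d^+_D(v)$ for all $v$. For $f:E(G)\to\mathbb{N}$, $G$ is $f$-edge-orientable if its line graph $L(G)$ admits an $f$-kernel-perfect orientation. For $v\in V(G)$, define $f_{p,v}:E(G)\to\mathbb{N}$ by $f_{p,v}(e)=d_G(v)$ if $e$ is incident to $v$, and $f_{p,v}(e)=p$ otherwise. *)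

theory Defs
  imports Main
begin

type_synonym 'a graph = "'a set \<times> 'a set set"

definition gverts :: "'a graph \<Rightarrow> 'a set" where "gverts G = fst G"
definition gedges :: "'a graph \<Rightarrow> 'a set set" where "gedges G = snd G"

definition degree :: "'a set set \<Rightarrow> 'a \<Rightarrow> nat" where
  "degree E v = card {e \<in> E. v \<in> e}"

definition maxdeg :: "'a graph \<Rightarrow> nat" where
  "maxdeg G = Max ((degree (gedges G)) ` gverts G)"

definition gjoin :: "'a graph \<Rightarrow> 'b graph \<Rightarrow> ('a + 'b) graph" where
  "gjoin G1 G2 =
     (Inl ` gverts G1 \<union> Inr ` gverts G2,
      (\<lambda>e. Inl ` e) ` gedges G1 \<union> (\<lambda>e. Inr ` e) ` gedges G2 \<union>
      {{Inl x, Inr y} | x y. x \<in> gverts G1 \<and> y \<in> gverts G2})"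

definition K2 :: "nat graph" where "K2 = ({0, 1}, {{0, 1}})"

definition edgeless :: "nat \<Rightarrow> nat graph" where "edgeless k = ({0..<k}, {})"

definition line_adj :: "'a set set \<Rightarrow> 'a set \<Rightarrow> 'a set \<Rightarrow> bool" where
  "line_adj E e f \<longleftrightarrow> e \<in> E \<and> f \<in> E \<and> e \<noteq> f \<and> e \<inter> f \<noteq> {}"

definition is_orientation :: "'b set \<Rightarrow> ('b \<Rightarrow> 'b \<Rightarrow> bool) \<Rightarrow> ('b \<times> 'b) set \<Rightarrow> bool" where
  "is_orientation V adj D \<longleftrightarrow>
     (\<forall>x y. (x, y) \<in> D \<longrightarrow> x \<in> V \<and> y \<in> V \<and> adj x y) \<and>
     (\<forall>x\<in>V. \<forall>y\<in>V. adj x y \<longrightarrow> (x, y) \<in> D \<or> (y, x) \<in> D)"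

definition is_kernel :: "('b \<times> 'b) set \<Rightarrow> 'b set \<Rightarrow> 'b set \<Rightarrow> bool" where
  "is_kernel D S K \<longleftrightarrow> K \<subseteq> S \<and> (\<forall>x\<in>K. \<forall>y\<in>K. (x, y) \<notin> D) \<and>
     (\<forall>x\<in>S - K. \<exists>y\<in>K. (x, y) \<in> D)"

definition kernel_perfect :: "'b set \<Rightarrow> ('b \<times> 'b) set \<Rightarrow> bool" where
  "kernel_perfect V D \<longleftrightarrow> (\<forall>S\<subseteq>V. \<exists>K. is_kernel D S K)"

definition outdeg :: "'b set \<Rightarrow> ('b \<times> 'b) set \<Rightarrow> 'b \<Rightarrow> nat" where
  "outdeg V D x = card {y \<in> V. (x, y) \<in> D}"

definition f_kernel_perfect_orientation ::
  "'b set \<Rightarrow> ('b \<Rightarrow> 'b \<Rightarrow> bool) \<Rightarrow> ('b \<Rightarrow> nat) \<Rightarrow> ('b \<times> 'b) set \<Rightarrow> bool" where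
  "f_kernel_perfect_orientation V adj f D \<longleftrightarrow>
     is_orientation V adj D \<and> kernel_perfect V D \<and> (\<forall>x\<in>V. f x \<ge> 1 + outdeg V D x)"

definition edge_orientable :: "'a graph \<Rightarrow> ('a set \<Rightarrow> nat) \<Rightarrow> bool" where
  "edge_orientable G f \<longleftrightarrow>
     (\<exists>D. f_kernel_perfect_orientation (gedges G) (line_adj (gedges G)) f D)"

definition f_pv :: "'a graph \<Rightarrow> nat \<Rightarrow> 'a \<Rightarrow> 'a set \<Rightarrow> nat" where
  "f_pv G p v e = (if v \<in> e then degree (gedges G) v else p)"

end

theory Submission
  imports Defs "HOL-Combinatorics.Transposition"
begin

(* Write a, b for the vertices of K_2 and c_i for the others. For v = c_j we orient the line
   graph explicitly; it is kernel-perfect by Neumann-Lara's criterion, because every nonempty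
   induced subdigraph has a sink unless it contains a 4-cycle ac_m -> bc_m -> bc_n -> ac_n -> ac_m,
   and then {ac_m, bc_n} is a semikernel. If v is a or b, then deg v = k + 1 = 2 forces k = 1,
   so G is a triangle and an automorphism reduces this case to v = c_0. *)

definition semikernel :: "('b \<times> 'b) set \<Rightarrow> 'b set \<Rightarrow> 'b set \<Rightarrow> bool" where
  "semikernel D S Z \<longleftrightarrow> Z \<subseteq> S \<and> (\<forall>x\<in>Z. \<forall>y\<in>Z. (x, y) \<notin> D) \<and>
     (\<forall>z\<in>Z. \<forall>y\<in>S. (z, y) \<in> D \<longrightarrow> (\<exists>z'\<in>Z. (y, z') \<in> D))"

lemma semikernel_if_sink:
  assumes "z \<in> S" and "\<And>y. y \<in> S \<Longrightarrow> (z, y) \<notin> D"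
  shows "\<exists>Z. Z \<noteq> {} \<and> semikernel D S Z"
  using assms unfolding semikernel_def by (intro exI[of _ "{z}"]) blast

text \<open>A kernel of \<open>S\<close> is a semikernel \<open>Z\<close> together with a kernel of what remains after
  removing \<open>Z\<close> and everything absorbed by \<open>Z\<close>.\<close>
lemma kernel_perfect_if_semikernels:
  assumes "finite V"
    and "\<And>S. S \<subseteq> V \<Longrightarrow> S \<noteq> {} \<Longrightarrow> \<exists>Z. Z \<noteq> {} \<and> semikernel D S Z"
  shows "kernel_perfect V D"
  unfolding kernel_perfect_def
proof (intro allI impI)
  fix S assume "S \<subseteq> V"
  then show "\<exists>K. is_kernel D S K"
  proof (induction "card S" arbitrary: S rule: less_induct)
    case less
    show ?case
    proof (cases "S = {}")
      case True
      then show ?thesis unfolding is_kernel_def by blast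
    next
      case False
      then obtain Z where "Z \<noteq> {}" and Z: "semikernel D S Z"
        using assms(2) less.prems by blast
      define S' where "S' = {y \<in> S - Z. \<forall>z\<in>Z. (y, z) \<notin> D}"
      have "S' \<subset> S"
        using \<open>Z \<noteq> {}\<close> Z unfolding S'_def semikernel_def by blast
      moreover have "finite S"
        using less.prems assms(1) finite_subset by blast
      ultimately have "card S' < card S"
        by (rule psubset_card_mono[rotated])
      then obtain K' where K': "is_kernel D S' K'"
        using less.hyps less.prems \<open>S' \<subset> S\<close> by blast
      have "is_kernel D S (Z \<union> K')"
        unfolding is_kernel_def
      proof (intro conjI ballI)
        show "Z \<union> K' \<subseteq> S"
          using Z K' unfolding semikernel_def is_kernel_def S'_def by blast
      next
        fix x y assume "x \<in> Z \<union> K'" and "y \<in> Z \<union> K'"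
        moreover have "y \<notin> S'" if "x \<in> Z" "y \<in> S" "(x, y) \<in> D"
          using Z that unfolding semikernel_def S'_def by blast
        ultimately show "(x, y) \<notin> D"
          using Z K' unfolding semikernel_def is_kernel_def S'_def by blast
      next
        fix x assume "x \<in> S - (Z \<union> K')"
        then show "\<exists>y\<in>Z \<union> K'. (x, y) \<in> D"
          using K' unfolding is_kernel_def S'_def by blast
      qed
      then show ?thesis ..
    qed
  qed
qed

lemma outdeg_le_card:
  assumes "{y \<in> V. (x, y) \<in> D} \<subseteq> A" and "finite A"
  shows "outdeg V D x \<le> card A"
  unfolding outdeg_def using assms by (rule card_mono[rotated])

lemma map_prod_image_mem_iff:
  assumes "inj_on h V" and "D \<subseteq> V \<times> V" and "x \<in> V" "y \<in> V"
  shows "(h x, h y) \<in> map_prod h h ` D \<longleftrightarrow> (x, y) \<in> D"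
proof
  assume "(h x, h y) \<in> map_prod h h ` D"
  then obtain a b where "(a, b) \<in> D" "h a = h x" "h b = h y"
    by auto
  with assms show "(x, y) \<in> D"
    by (auto dest: inj_onD)
qed force

lemma is_orientation_image:
  assumes "inj_on h V"
    and adj: "\<And>x y. x \<in> V \<Longrightarrow> y \<in> V \<Longrightarrow> adj (h x) (h y) = adj' x y"
    and D: "is_orientation V adj' D"
  shows "is_orientation (h ` V) adj (map_prod h h ` D)"
  unfolding is_orientation_def
proof (rule conjI; intro allI impI ballI)
  fix u w assume "(u, w) \<in> map_prod h h ` D"
  then obtain x y where "(x, y) \<in> D" "u = h x" "w = h y"
    by auto
  then show "u \<in> h ` V \<and> w \<in> h ` V \<and> adj u w"
    using D adj unfolding is_orientation_def by auto
next
  fix u w assume "u \<in> h ` V" "w \<in> h ` V" "adj u w"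
  then obtain x y where "x \<in> V" "y \<in> V" "u = h x" "w = h y" "adj' x y"
    using adj by auto
  moreover have "D \<subseteq> V \<times> V"
    using D unfolding is_orientation_def by auto
  ultimately show "(u, w) \<in> map_prod h h ` D \<or> (w, u) \<in> map_prod h h ` D"
    using D map_prod_image_mem_iff[OF assms(1)] unfolding is_orientation_def by auto
qed

lemma kernel_perfect_image:
  assumes "inj_on h V" and "D \<subseteq> V \<times> V" and "kernel_perfect V D"
  shows "kernel_perfect (h ` V) (map_prod h h ` D)"
  unfolding kernel_perfect_def
proof (intro allI impI)
  fix S assume "S \<subseteq> h ` V"
  have "{x \<in> V. h x \<in> S} \<subseteq> V"
    by blast
  then obtain K where K: "is_kernel D {x \<in> V. h x \<in> S} K"
    using assms(3) unfolding kernel_perfect_def by blast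
  have "is_kernel (map_prod h h ` D) S (h ` K)"
    unfolding is_kernel_def
  proof (intro conjI ballI)
    show "h ` K \<subseteq> S"
      using K unfolding is_kernel_def by auto
  next
    fix u w assume "u \<in> h ` K" "w \<in> h ` K"
    then obtain x y where "x \<in> K" "y \<in> K" "u = h x" "w = h y"
      by auto
    moreover from this K have "x \<in> V" "y \<in> V" "(x, y) \<notin> D"
      unfolding is_kernel_def by auto
    ultimately show "(u, w) \<notin> map_prod h h ` D"
      using map_prod_image_mem_iff[OF assms(1,2)] by simp
  next
    fix u assume u: "u \<in> S - h ` K"
    then obtain x where "x \<in> V" "u = h x"
      using \<open>S \<subseteq> h ` V\<close> by auto
    with u have "x \<in> {x \<in> V. h x \<in> S} - K"
      by auto
    then obtain y where "y \<in> K" "(x, y) \<in> D"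
      using K unfolding is_kernel_def by blast
    then show "\<exists>w\<in>h ` K. (u, w) \<in> map_prod h h ` D"
      using \<open>u = h x\<close> by force
  qed
  then show "\<exists>K. is_kernel (map_prod h h ` D) S K" ..
qed

lemma outdeg_image:
  assumes "inj_on h V" and "D \<subseteq> V \<times> V" and "x \<in> V"
  shows "outdeg (h ` V) (map_prod h h ` D) (h x) = outdeg V D x"
proof -
  have "{u \<in> h ` V. (h x, u) \<in> map_prod h h ` D} = h ` {y \<in> V. (x, y) \<in> D}"
  proof (intro equalityI subsetI)
    fix u assume "u \<in> {u \<in> h ` V. (h x, u) \<in> map_prod h h ` D}"
    then have "u \<in> h ` V" and arc: "(h x, u) \<in> map_prod h h ` D"
      by (simp_all only: mem_Collect_eq)
    then obtain y where "y \<in> V" "u = h y"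
      by blast
    with arc have "(x, y) \<in> D"
      using map_prod_image_mem_iff[OF assms] by simp
    with \<open>y \<in> V\<close> \<open>u = h y\<close> show "u \<in> h ` {y \<in> V. (x, y) \<in> D}"
      by blast
  qed force
  then show ?thesis
    unfolding outdeg_def using assms(1) by (simp add: card_image inj_on_subset)
qed

lemma f_kernel_perfect_orientation_image:
  assumes "inj_on h V"
    and "\<And>x y. x \<in> V \<Longrightarrow> y \<in> V \<Longrightarrow> adj (h x) (h y) = adj' x y"
    and "\<And>x. x \<in> V \<Longrightarrow> f (h x) = f' x"
    and "f_kernel_perfect_orientation V adj' f' D"
  shows "f_kernel_perfect_orientation (h ` V) adj f (map_prod h h ` D)"
proof -
  have orient: "is_orientation V adj' D"
    using assms(4) unfolding f_kernel_perfect_orientation_def by blast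
  then have D: "D \<subseteq> V \<times> V"
    unfolding is_orientation_def by auto
  show ?thesis
    using assms is_orientation_image[OF assms(1,2) orient] kernel_perfect_image[OF assms(1) D]
      outdeg_image[OF assms(1) D]
    unfolding f_kernel_perfect_orientation_def by auto
qed

lemma line_adj_permute:
  assumes "inj \<sigma>" and "(`) \<sigma> ` E = E"
  shows "line_adj E (\<sigma> ` e) (\<sigma> ` e') = line_adj E e e'"
proof -
  have "inj ((`) \<sigma>)"
    using assms(1) by (simp add: inj_image_eq_iff inj_def)
  then have "\<sigma> ` e \<in> E \<longleftrightarrow> e \<in> E" for e
    using assms(2) by (metis inj_image_mem_iff)
  then show ?thesis
    unfolding line_adj_def using assms(1) by (auto simp: inj_image_eq_iff simp flip: image_Int image_empty)
qed

lemma edge_orientable_permute_vertices: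
  assumes "inj \<sigma>" and "(`) \<sigma> ` gedges G = gedges G"
    and "\<And>e. e \<in> gedges G \<Longrightarrow> g (\<sigma> ` e) = f e"
    and "edge_orientable G f"
  shows "edge_orientable G g"
proof -
  obtain D where "f_kernel_perfect_orientation (gedges G) (line_adj (gedges G)) f D"
    using assms(4) unfolding edge_orientable_def by blast
  then have "f_kernel_perfect_orientation ((`) \<sigma> ` gedges G) (line_adj (gedges G)) g
      (map_prod ((`) \<sigma>) ((`) \<sigma>) ` D)"
    using assms(3) line_adj_permute[OF assms(1,2)]
    by (intro f_kernel_perfect_orientation_image) (auto simp: inj_on_def inj_image_eq_iff[OF assms(1)])
  then show ?thesis
    unfolding edge_orientable_def assms(2) by blast
qed

lemma degree_image:
  assumes "inj_on h N"
  shows "degree (h ` N) u = card {n \<in> N. u \<in> h n}"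
proof -
  have "{e \<in> h ` N. u \<in> e} = h ` {n \<in> N. u \<in> h n}"
    by auto
  then show ?thesis
    unfolding degree_def using assms by (simp add: card_image inj_on_subset)
qed

text \<open>Names for the edges of \<open>K\<^sub>2 \<or> \<overline>K\<^sub>k\<close>, with \<open>a = Inl 0\<close>, \<open>b = Inl 1\<close> and \<open>c\<^sub>i = Inr i\<close>.\<close>
datatype join_edge = AB | AC nat | BC nat

fun edge_of :: "join_edge \<Rightarrow> (nat + nat) set" where
  "edge_of AB = {Inl 0, Inl 1}"
| "edge_of (AC i) = {Inl 0, Inr i}"
| "edge_of (BC i) = {Inl 1, Inr i}"

definition join_edges :: "nat \<Rightarrow> join_edge set" where
  "join_edges k = insert AB (AC ` {..<k} \<union> BC ` {..<k})"

lemma join_edges_simps [simp]: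
  "AB \<in> join_edges k" "AC i \<in> join_edges k \<longleftrightarrow> i < k" "BC i \<in> join_edges k \<longleftrightarrow> i < k"
  by (auto simp: join_edges_def)

lemma finite_join_edges: "finite (join_edges k)"
  by (simp add: join_edges_def)

lemma inj_edge_of: "inj edge_of"
proof (rule injI)
  fix x y assume "edge_of x = edge_of y"
  then show "x = y"
    by (cases x; cases y) (auto simp: doubleton_eq_iff)
qed

lemma gverts_join: "gverts (gjoin K2 (edgeless k)) = {Inl 0, Inl 1} \<union> Inr ` {..<k}"
  unfolding gjoin_def K2_def edgeless_def gverts_def by auto

lemma gedges_join: "gedges (gjoin K2 (edgeless k)) = edge_of ` join_edges k"
proof -
  have "gedges (gjoin K2 (edgeless k)) =
      insert {Inl 0, Inl 1} ((\<lambda>i. {Inl 0, Inr i}) ` {..<k} \<union> (\<lambda>i. {Inl 1, Inr i}) ` {..<k})"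
    unfolding gedges_def gjoin_def K2_def edgeless_def gverts_def by auto
  then show ?thesis
    by (simp add: join_edges_def image_Un image_image)
qed

lemma degree_join_K2:
  assumes "x \<in> {0, 1}"
  shows "degree (gedges (gjoin K2 (edgeless k))) (Inl x) = k + 1"
proof -
  have "{n \<in> join_edges k. Inl x \<in> edge_of n} =
      insert AB ((if x = 0 then AC else BC) ` {..<k})"
    using assms by (auto simp: join_edges_def)
  then show ?thesis
    unfolding gedges_join using inj_edge_of
    by (simp add: degree_image inj_on_subset card_image inj_on_def image_iff)
qed

lemma degree_join_c:
  assumes "j < k"
  shows "degree (gedges (gjoin K2 (edgeless k))) (Inr j) = 2"
proof -
  have "{n \<in> join_edges k. Inr j \<in> edge_of n} = {AC j, BC j}"
    using assms by (auto simp: join_edges_def)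
  then show ?thesis
    unfolding gedges_join using inj_edge_of by (simp add: degree_image inj_on_subset)
qed

lemma maxdeg_join_ge: "maxdeg (gjoin K2 (edgeless k)) \<ge> k + 1"
proof -
  have "degree (gedges (gjoin K2 (edgeless k))) (Inl 0) \<le> maxdeg (gjoin K2 (edgeless k))"
    unfolding maxdeg_def by (rule Max_ge) (auto simp: gverts_join)
  then show ?thesis
    using degree_join_K2[of 0 k] by simp
qed

text \<open>\<open>AC j\<close> is a sink and \<open>BC j\<close> points only to it, as \<open>f\<close> is 2 there. The other \<open>AC i\<close>
  and \<open>BC i\<close> form transitive tournaments in opposite directions, and \<open>AC i\<close>--\<open>BC i\<close> points to
  \<open>BC i\<close> exactly when \<open>BC i\<close> has a successor in its tournament; this keeps every out-degree
  below \<open>max 4 (k + 1)\<close>.\<close>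
fun cj_arc :: "nat \<Rightarrow> nat \<Rightarrow> join_edge \<Rightarrow> join_edge \<Rightarrow> bool" where
  "cj_arc k j AB y \<longleftrightarrow> y \<in> {AC j, BC j}"
| "cj_arc k j (AC i) y \<longleftrightarrow> i \<noteq> j \<and>
     (y \<in> {AB, AC j} \<union> AC ` {..<i} \<or> y = BC i \<and> {i<..<k} - {j} \<noteq> {})"
| "cj_arc k j (BC i) y \<longleftrightarrow> (if i = j then y = AC j else
     y \<in> {AB, BC j} \<union> BC ` {i<..<k} \<or> y = AC i \<and> {i<..<k} - {j} = {})"

definition cj_orientation :: "nat \<Rightarrow> nat \<Rightarrow> (join_edge \<times> join_edge) set" where
  "cj_orientation k j = {(x, y). x \<in> join_edges k \<and> y \<in> join_edges k \<and> cj_arc k j x y}"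

lemma mem_cj_orientation [simp]:
  "(x, y) \<in> cj_orientation k j \<longleftrightarrow> x \<in> join_edges k \<and> y \<in> join_edges k \<and> cj_arc k j x y"
  by (simp add: cj_orientation_def)

lemma line_adj_edge_of:
  "line_adj (edge_of ` N) (edge_of x) (edge_of y) \<longleftrightarrow>
     x \<in> N \<and> y \<in> N \<and> x \<noteq> y \<and> edge_of x \<inter> edge_of y \<noteq> {}"
  unfolding line_adj_def using inj_edge_of by (auto simp: inj_image_mem_iff inj_eq)

lemma cj_orientation_is_orientation:
  assumes "j < k"
  shows "is_orientation (join_edges k)
    (\<lambda>x y. line_adj (edge_of ` join_edges k) (edge_of x) (edge_of y)) (cj_orientation k j)"
proof -
  have "x \<noteq> y \<and> edge_of x \<inter> edge_of y \<noteq> {}" if "cj_arc k j x y" for x y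
    using that by (cases x; cases y) (auto simp: image_iff split: if_splits)
  moreover have "cj_arc k j x y \<or> cj_arc k j y x"
    if "x \<in> join_edges k" "y \<in> join_edges k" "x \<noteq> y" "edge_of x \<inter> edge_of y \<noteq> {}" for x y
    using that assms by (cases x; cases y) (auto simp: image_iff)
  ultimately show ?thesis
    unfolding is_orientation_def mem_cj_orientation line_adj_edge_of by blast
qed

lemma cj_orientation_semikernel_4cycle:
  assumes "S \<subseteq> join_edges k" and "AB \<notin> S" and "AC m \<in> S" "BC n \<in> S" and "m < n"
    and AC_in_S: "\<And>i. AC i \<in> S \<Longrightarrow> m \<le> i \<and> i \<noteq> j"
    and BC_in_S: "\<And>i. BC i \<in> S \<Longrightarrow> i \<le> n \<and> i \<noteq> j"
  shows "semikernel (cj_orientation k j) S {AC m, BC n}"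
  unfolding semikernel_def
proof (intro conjI ballI impI)
  show "{AC m, BC n} \<subseteq> S"
    using assms(3,4) by simp
next
  fix x y assume "x \<in> {AC m, BC n}" "y \<in> {AC m, BC n}"
  then show "(x, y) \<notin> cj_orientation k j"
    using \<open>m < n\<close> by (auto simp: image_iff split: if_splits)
next
  fix z y assume z: "z \<in> {AC m, BC n}" and "y \<in> S" "(z, y) \<in> cj_orientation k j"
  have "m \<noteq> j" "n \<noteq> j" "n < k"
    using AC_in_S[OF assms(3)] BC_in_S[OF assms(4)] assms(1,4) by auto
  from \<open>y \<in> S\<close> have "y = BC m \<or> y = AC n"
  proof (cases y)
    case (AC i)
    then show ?thesis
      using z \<open>(z, y) \<in> cj_orientation k j\<close> AC_in_S[of i] \<open>y \<in> S\<close> by (auto split: if_splits)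
  next
    case (BC i)
    then show ?thesis
      using z \<open>(z, y) \<in> cj_orientation k j\<close> BC_in_S[of i] \<open>y \<in> S\<close> by (auto split: if_splits)
  qed (use assms(2) in simp)
  moreover have "(BC m, BC n) \<in> cj_orientation k j" "(AC n, AC m) \<in> cj_orientation k j"
    using \<open>m < n\<close> \<open>n < k\<close> \<open>m \<noteq> j\<close> \<open>n \<noteq> j\<close> by auto
  ultimately show "\<exists>z'\<in>{AC m, BC n}. (y, z') \<in> cj_orientation k j"
    by blast
qed

lemma cj_orientation_semikernel_avoiding_j:
  assumes "S \<subseteq> join_edges k" and "S \<noteq> {}" and "AB \<notin> S" "AC j \<notin> S" "BC j \<notin> S"
  shows "\<exists>Z. Z \<noteq> {} \<and> semikernel (cj_orientation k j) S Z"
proof -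
  define I where "I = {i. AC i \<in> S}"
  define J where "J = {i. BC i \<in> S}"
  have "I \<subseteq> {..<k}" "J \<subseteq> {..<k}"
    using assms(1) by (auto simp: I_def J_def)
  then have "finite I" "finite J"
    by (auto intro: finite_subset)
  define m where "m = Min I"
  define n where "n = Max J"
  have m_le: "m \<le> i" if "AC i \<in> S" for i
    using Min_le[OF \<open>finite I\<close>] that by (simp add: m_def I_def)
  have n_ge: "i \<le> n" if "BC i \<in> S" for i
    using Max_ge[OF \<open>finite J\<close>] that by (simp add: n_def J_def)
  have AC_m: "AC m \<in> S" if "I \<noteq> {}"
    using Min_in[OF \<open>finite I\<close> that] by (simp add: m_def I_def)
  have BC_n: "BC n \<in> S" if "J \<noteq> {}"
    using Max_in[OF \<open>finite J\<close> that] by (simp add: n_def J_def)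
  have S_cases: "(\<exists>i. x = AC i) \<or> (\<exists>i. x = BC i)" if "x \<in> S" for x
    using that assms(3) by (cases x) auto
  show ?thesis
  proof (cases "I \<noteq> {} \<and> \<not> (BC m \<in> S \<and> {m<..<k} - {j} \<noteq> {})")
    case True
    then show ?thesis
      using S_cases AC_m assms(4) by (intro semikernel_if_sink[of "AC m"]) (auto dest: m_le)
  next
    case no_AC_sink: False
    show ?thesis
    proof (cases "J \<noteq> {} \<and> \<not> (AC n \<in> S \<and> {n<..<k} - {j} = {})")
      case True
      then show ?thesis
        using S_cases BC_n assms(5) by (intro semikernel_if_sink[of "BC n"]) (auto dest: n_ge)
    next
      case no_BC_sink: False
      have "I \<noteq> {}"
        using no_BC_sink S_cases assms(2) by (auto simp: I_def J_def)
      with no_AC_sink have "BC m \<in> S" "{m<..<k} - {j} \<noteq> {}"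
        by auto
      with no_BC_sink have "AC n \<in> S" "{n<..<k} - {j} = {}"
        by (auto simp: J_def)
      have "BC n \<in> S"
        using BC_n \<open>BC m \<in> S\<close> by (auto simp: J_def)
      from \<open>AC n \<in> S\<close> \<open>{n<..<k} - {j} = {}\<close> \<open>BC m \<in> S\<close> \<open>{m<..<k} - {j} \<noteq> {}\<close> have "m < n"
        using n_ge[of m] by (cases "m = n") auto
      then have "semikernel (cj_orientation k j) S {AC m, BC n}"
        using AC_m[OF \<open>I \<noteq> {}\<close>] \<open>BC n \<in> S\<close> assms(4,5) m_le n_ge
        by (intro cj_orientation_semikernel_4cycle[OF assms(1,3)]) auto
      then show ?thesis
        by (intro exI[of _ "{AC m, BC n}"]) simp
    qed
  qed
qed

lemma cj_orientation_kernel_perfect: "kernel_perfect (join_edges k) (cj_orientation k j)"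
proof (rule kernel_perfect_if_semikernels[OF finite_join_edges])
  fix S assume S: "S \<subseteq> join_edges k" "S \<noteq> {}"
  consider "AC j \<in> S" | "AC j \<notin> S" "BC j \<in> S" | "AC j \<notin> S" "BC j \<notin> S" "AB \<in> S"
    | "AB \<notin> S" "AC j \<notin> S" "BC j \<notin> S"
    by blast
  then show "\<exists>Z. Z \<noteq> {} \<and> semikernel (cj_orientation k j) S Z"
  proof cases
    case 1
    then show ?thesis by (intro semikernel_if_sink[of "AC j"]) auto
  next
    case 2
    then show ?thesis by (intro semikernel_if_sink[of "BC j"]) auto
  next
    case 3
    then show ?thesis by (intro semikernel_if_sink[of AB]) auto
  next
    case 4
    then show ?thesis by (rule cj_orientation_semikernel_avoiding_j[OF S])
  qed
qed

lemma card_two_Un_image_le: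
  assumes "finite A" and "finite B"
  shows "card ({a, b} \<union> f ` A \<union> B) \<le> 2 + card A + card B"
proof -
  have "card ({a, b} \<union> f ` A \<union> B) \<le> card {a, b} + card (f ` A) + card B"
    by (meson add_right_mono card_Un_le order_trans)
  also have "\<dots> \<le> 2 + card A + card B"
    using card_image_le[OF assms(1), of f] by (simp add: card_insert_le_m1 card_insert_if)
  finally show ?thesis .
qed

lemma card_below_above:
  assumes "i < k" "j < k" "i \<noteq> j"
  shows "card ({..<i} - {j}) + card ({i<..<k} - {j}) + 2 = k"
proof -
  have "({..<i} - {j}) \<union> ({i<..<k} - {j}) = {..<k} - {i, j}"
    using assms by auto
  moreover have "card ({..<k} - {i, j}) + 2 = k"
    using assms by (simp add: card_Diff_subset)
  moreover have "card ({..<i} - {j}) + card ({i<..<k} - {j}) =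
      card (({..<i} - {j}) \<union> ({i<..<k} - {j}))"
    by (rule card_Un_disjoint[symmetric]) auto
  ultimately show ?thesis
    by simp
qed

lemma cj_orientation_outdeg_AC:
  assumes "i \<noteq> j"
  shows "outdeg (join_edges k) (cj_orientation k j) (AC i)
    \<le> 2 + card ({..<i} - {j}) + (if {i<..<k} - {j} = {} then 0 else 1)"
proof -
  have "{y \<in> join_edges k. (AC i, y) \<in> cj_orientation k j}
      \<subseteq> {AB, AC j} \<union> AC ` ({..<i} - {j}) \<union> (if {i<..<k} - {j} = {} then {} else {BC i})"
    using assms by auto
  then have "outdeg (join_edges k) (cj_orientation k j) (AC i)
      \<le> card ({AB, AC j} \<union> AC ` ({..<i} - {j}) \<union> (if {i<..<k} - {j} = {} then {} else {BC i}))"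
    by (rule outdeg_le_card) simp
  also have "\<dots> \<le> 2 + card ({..<i} - {j}) + card (if {i<..<k} - {j} = {} then {} else {BC i})"
    by (rule card_two_Un_image_le) simp_all
  finally show ?thesis
    by (simp split: if_splits)
qed

lemma cj_orientation_outdeg_BC:
  assumes "i \<noteq> j"
  shows "outdeg (join_edges k) (cj_orientation k j) (BC i)
    \<le> 2 + card ({i<..<k} - {j}) + (if {i<..<k} - {j} = {} then 1 else 0)"
proof -
  have "{y \<in> join_edges k. (BC i, y) \<in> cj_orientation k j}
      \<subseteq> {AB, BC j} \<union> BC ` ({i<..<k} - {j}) \<union> (if {i<..<k} - {j} = {} then {AC i} else {})"
    using assms by auto
  then have "outdeg (join_edges k) (cj_orientation k j) (BC i)
      \<le> card ({AB, BC j} \<union> BC ` ({i<..<k} - {j}) \<union> (if {i<..<k} - {j} = {} then {AC i} else {}))"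
    by (rule outdeg_le_card) simp
  also have "\<dots> \<le> 2 + card ({i<..<k} - {j}) + card (if {i<..<k} - {j} = {} then {AC i} else {})"
    by (rule card_two_Un_image_le) simp_all
  finally show ?thesis
    by (simp split: if_splits)
qed

lemma cj_orientation_outdeg:
  assumes "j < k" and "4 \<le> p" and "k + 1 \<le> p" and "x \<in> join_edges k"
  shows "1 + outdeg (join_edges k) (cj_orientation k j) x \<le> (if Inr j \<in> edge_of x then 2 else p)"
proof (cases x)
  case AB
  have "outdeg (join_edges k) (cj_orientation k j) AB \<le> card {AC j, BC j}"
    by (rule outdeg_le_card) auto
  then show ?thesis
    using AB assms(2) by simp
next
  case (AC i)
  show ?thesis
  proof (cases "i = j")
    case True
    have "outdeg (join_edges k) (cj_orientation k j) (AC i) = 0"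
      by (simp add: outdeg_def True)
    then show ?thesis
      using AC True by simp
  next
    case False
    then have "card ({..<i} - {j}) + card ({i<..<k} - {j}) + 2 = k"
      using AC assms(1,4) by (intro card_below_above) simp_all
    then show ?thesis
      using cj_orientation_outdeg_AC[OF False, of k] AC False assms(3) card_gt_0_iff[of "{i<..<k} - {j}"]
      by (cases "{i<..<k} - {j} = {}") simp_all
  qed
next
  case (BC i)
  show ?thesis
  proof (cases "i = j")
    case True
    have "outdeg (join_edges k) (cj_orientation k j) (BC i) \<le> card {AC j}"
      by (rule outdeg_le_card) (auto simp: True)
    then show ?thesis
      using BC True by simp
  next
    case False
    then have "card ({..<i} - {j}) + card ({i<..<k} - {j}) + 2 = k"
      using BC assms(1,4) by (intro card_below_above) simp_all
    then show ?thesis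
      using cj_orientation_outdeg_BC[OF False, of k] BC False assms(2,3)
      by (cases "{i<..<k} - {j} = {}") simp_all
  qed
qed

lemma cj_orientation_f_kernel_perfect:
  assumes "j < k" and "4 \<le> p" and "k + 1 \<le> p"
  shows "f_kernel_perfect_orientation (join_edges k)
    (\<lambda>x y. line_adj (edge_of ` join_edges k) (edge_of x) (edge_of y))
    (\<lambda>x. if Inr j \<in> edge_of x then 2 else p) (cj_orientation k j)"
  unfolding f_kernel_perfect_orientation_def
  using cj_orientation_is_orientation[OF assms(1)] cj_orientation_kernel_perfect
    cj_orientation_outdeg[OF assms]
  by blast

lemma edge_orientable_join_at_c:
  assumes "j < k" and "4 \<le> p" and "k + 1 \<le> p"
  shows "edge_orientable (gjoin K2 (edgeless k)) (f_pv (gjoin K2 (edgeless k)) p (Inr j))"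
proof -
  have "f_kernel_perfect_orientation (edge_of ` join_edges k) (line_adj (edge_of ` join_edges k))
      (f_pv (gjoin K2 (edgeless k)) p (Inr j)) (map_prod edge_of edge_of ` cj_orientation k j)"
    using degree_join_c[OF assms(1)]
    by (intro f_kernel_perfect_orientation_image[OF _ _ _ cj_orientation_f_kernel_perfect[OF assms]])
      (auto simp: f_pv_def gedges_join inj_on_subset[OF inj_edge_of])
  then show ?thesis
    unfolding edge_orientable_def gedges_join by blast
qed

text \<open>\<open>K\<^sub>2 \<or> \<overline>K\<^sub>1\<close> is a triangle, so swapping \<open>Inl x\<close> with \<open>Inr 0\<close> is an automorphism.\<close>
lemma edge_orientable_triangle:
  assumes "x \<in> {0, 1}" and "4 \<le> p"
  shows "edge_orientable (gjoin K2 (edgeless 1)) (f_pv (gjoin K2 (edgeless 1)) p (Inl x))"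
proof (rule edge_orientable_permute_vertices)
  let ?\<sigma> = "transpose (Inl x) (Inr 0)"
  show "inj ?\<sigma>"
    by (rule inj_transpose)
  have triangle: "gedges (gjoin K2 (edgeless 1)) = {{Inl 0, Inl 1}, {Inl 0, Inr 0}, {Inl 1, Inr 0}}"
    by (simp add: gedges_join join_edges_def lessThan_Suc insert_commute)
  show "(`) ?\<sigma> ` gedges (gjoin K2 (edgeless 1)) = gedges (gjoin K2 (edgeless 1))"
    unfolding triangle using assms(1) by (auto simp: transpose_def insert_commute)
  show "f_pv (gjoin K2 (edgeless 1)) p (Inl x) (?\<sigma> ` e) = f_pv (gjoin K2 (edgeless 1)) p (Inr 0) e"
    for e
    using degree_join_K2[OF assms(1), of 1] degree_join_c[of 0 1]
    by (auto simp: f_pv_def transpose_def)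
  show "edge_orientable (gjoin K2 (edgeless 1)) (f_pv (gjoin K2 (edgeless 1)) p (Inr 0))"
    using assms(2) by (intro edge_orientable_join_at_c) simp_all
qed

theorem mainTheorem17:
  fixes k p :: nat and v :: "nat + nat"
  assumes "k \<ge> 1"
    and "v \<in> gverts (gjoin K2 (edgeless k))"
    and "degree (gedges (gjoin K2 (edgeless k))) v = 2"
    and "p \<ge> max 4 (maxdeg (gjoin K2 (edgeless k)))"
  shows "edge_orientable (gjoin K2 (edgeless k)) (f_pv (gjoin K2 (edgeless k)) p v)"
proof -
  have "4 \<le> p" "k + 1 \<le> p"
    using assms(4) maxdeg_join_ge[of k] by auto
  from assms(2) consider x where "x \<in> {0, 1}" "v = Inl x" | j where "j < k" "v = Inr j"
    unfolding gverts_join by auto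
  then show ?thesis
  proof cases
    case (1 x)
    with assms(3) have "k = 1"
      using degree_join_K2 by simp
    with 1 show ?thesis
      using edge_orientable_triangle \<open>4 \<le> p\<close> by simp
  next
    case (2 j)
    then show ?thesis
      using edge_orientable_join_at_c \<open>4 \<le> p\<close> \<open>k + 1 \<le> p\<close> by simp
  qed
qed

end
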